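(* Assume (A1), (A2), (A3) below, let $r\in\mathcal R_\epsilon$, $x_0\in\mathcal D_x(r)$, let $p$ be the fixed planned path, and consider the closed-loop PathFG+MPC trajectory $s_{k+1}=g(\tilde\xi_N^*(x_k,s_k))$, $x_{k+1}=f(x_k,\tilde\kappa(x_k,s_k))$ from an initial condition $(x_0,s_0)\in\tilde\Gamma$. Then there is $k_M\ge0$ such that $s_k=1$ for all $k\ge k_M+1$.
   Context: System: $x_{k+1}=f(x_k,u_k)$, $x_k\in\mathbb R^{n_x}$, $u_k\in\mathbb R^{n_u}$, with $\mathcal X=\{x:h_x(x)\le0\}$, $\mathcal U=\{u:h_u(u)\le0\}$. (A1) $f$ is locally Lipschitz, $h_x,h_u$ are continuous, and there are a set $\mathcal R\subseteq\mathbb R^{n_r}$ and continuous maps $r\mapsto\bar x_r\in\mathcal X$, $r\mapsto\bar u_r\in\mathcal U$ with $\bar x_r=f(\bar x_r,\bar u_r)$. For fixed $\epsilon>0$, $\mathcal R_\epsilon=\{r\in\mathcal R:h_x(\bar x_r)\le-\epsilon,\ h_u(\bar u_r)\le-\epsilon\}$. MPC: horizon $N\in\mathbb N_{>0}$, stage cost $\ell:\mathcal X\times\mathcal U\times\mathcal R_\epsilon\to\mathbb R_{\ge0}$, terminal set $\mathcal T\subseteq\mathcal X\times\mathcal R$, terminal cost $V:\mathcal T\to\mathbb R_{\ge0}$. The OCP at $(x,r)$: minimize $V(\xi_N,r)+\sum_{i=0}^{N-1}\ell(\xi_i,\mu_i,r)$ subject to $\xi_0=x$, $\xi_{i+1}=f(\xi_i,\mu_i)$,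 $\xi_i\in\mathcal X$, $\mu_i\in\mathcal U$ ($i=0,\dots,N-1$), $(\xi_N,r)\in\mathcal T$. $\Gamma=\{(x,r)\in\mathcal X\times\mathcal R_\epsilon:$ OCP feasible$\}$; $\zeta^*(x,r)=(\xi_0^*,\dots,\xi_N^*,\mu_0^*,\dots,\mu_{N-1}^* )$ is the minimizer (treated as a function), $\xi_N^*(x,r)$ its final state, $\kappa(x,r)=\mu_0^*(x,r)$. (A2) (a) $\ell$ uniformly continuous, $\ell(\bar x_r,\bar u_r,r)=0$, $\ell(x,u,r)\ge\gamma_\ell(\|x-\bar x_r\|)$ for some $\gamma_\ell\in\mathcal K_\infty$, all $(x,r)\in\Gamma$, $u\in\mathcal U$. (b) $V$ uniformly continuous, $V(\bar x_r,r)=0$, $V\ge0$ on $\mathcal T$, and some $\kappa_T:\mathcal T\to\mathcal U$ satisfies $V(f(x,\kappa_T(x,r)),r)-V(x,r)\le-\ell(x,\kappa_T(x,r),r)$ on $\mathcal T$. (c) $(x,r)\in\mathcal T\Rightarrow(f(x,\kappa_T(x,r)),r)\in\mathcal T$, $x\in\mathcal X$, $\kappa_T(x,r)\in\mathcal U$. (d) $(\bar x_r,r)\in\operatorname{int}\mathcal T$ for all $r\in\mathcal R_\epsilon$. (e) $\zeta^*$ is Lipschitz continuous. Paths: a feasible path for $(x_0,r)$, $r\in\mathcal R_\epsilon$, is $\{p(s):s\in[0,1]\}$ with $p:[0,1]\to\mathcal R_\epsilon$ continuous, $(x_0,p(0))\in\Gamma$, $p(1)=r$; $\mathcal D_x(r)$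 is the set of $x_0$ for which such a path exists. (A3) For such $(x_0,r)$ the planner returns a feasible path. With $p$ fixed: $\tilde{\mathcal T}=\{(x,s):(x,p(s))\in\mathcal T\}$, $\tilde\Gamma=\{(x,s):(x,p(s))\in\Gamma\}$, $\tilde\xi_N^*(x,s)=\xi_N^*(x,p(s))$, $\tilde\kappa(x,s)=\kappa(x,p(s))$, and $g(\xi)=\max\{s\in[0,1]:(\xi,s)\in\tilde{\mathcal T}\}$. *)

theory Defs
  imports "HOL-Analysis.Analysis"
begin

definition cset :: "('a \<Rightarrow> real ^ 'm) \<Rightarrow> 'a set" where
  "cset h = {x. \<forall>i. h x $ i \<le> 0}"

definition Reps :: "'r set \<Rightarrow> ('r \<Rightarrow> 'x) \<Rightarrow> ('r \<Rightarrow> 'u) \<Rightarrow>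
    ('x \<Rightarrow> real ^ 'm) \<Rightarrow> ('u \<Rightarrow> real ^ 'q) \<Rightarrow> real \<Rightarrow> 'r set" where
  "Reps R xbar ubar hx hu eps =
     {r \<in> R. (\<forall>i. hx (xbar r) $ i \<le> - eps) \<and> (\<forall>j. hu (ubar r) $ j \<le> - eps)}"

definition ocp_feasible :: "('x \<Rightarrow> 'u \<Rightarrow> 'x) \<Rightarrow> ('x \<Rightarrow> real ^ 'm) \<Rightarrow> ('u \<Rightarrow> real ^ 'q)
    \<Rightarrow> ('x \<times> 'r) set \<Rightarrow> nat \<Rightarrow> 'x \<Rightarrow> 'r \<Rightarrow> (nat \<Rightarrow> 'x) \<Rightarrow> (nat \<Rightarrow> 'u) \<Rightarrow> bool" where
  "ocp_feasible f hx hu T N x r \<xi> \<mu> \<longleftrightarrow>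
     \<xi> 0 = x \<and>
     (\<forall>i<N. \<xi> (Suc i) = f (\<xi> i) (\<mu> i)) \<and>
     (\<forall>i<N. \<xi> i \<in> cset hx \<and> \<mu> i \<in> cset hu) \<and>
     (\<xi> N, r) \<in> T"

definition ocp_cost :: "('x \<Rightarrow> 'u \<Rightarrow> 'r \<Rightarrow> real) \<Rightarrow> ('x \<Rightarrow> 'r \<Rightarrow> real) \<Rightarrow> nat
    \<Rightarrow> 'r \<Rightarrow> (nat \<Rightarrow> 'x) \<Rightarrow> (nat \<Rightarrow> 'u) \<Rightarrow> real" where
  "ocp_cost l V N r \<xi> \<mu> = V (\<xi> N) r + (\<Sum>i<N. l (\<xi> i) (\<mu> i) r)"

definition Gamma :: "('x \<Rightarrow> 'u \<Rightarrow> 'x) \<Rightarrow> ('x \<Rightarrow> real ^ 'm) \<Rightarrow> ('u \<Rightarrow> real ^ 'q)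
    \<Rightarrow> ('x \<times> 'r) set \<Rightarrow> nat \<Rightarrow> 'r set \<Rightarrow> ('x \<times> 'r) set" where
  "Gamma f hx hu T N Rs =
     {(x, r). x \<in> cset hx \<and> r \<in> Rs \<and> (\<exists>\<xi> \<mu>. ocp_feasible f hx hu T N x r \<xi> \<mu>)}"

definition class_K_inf :: "(real \<Rightarrow> real) \<Rightarrow> bool" where
  "class_K_inf \<gamma> \<longleftrightarrow> continuous_on {0..} \<gamma> \<and> \<gamma> 0 = 0 \<and> strict_mono_on {0..} \<gamma> \<and>
     filterlim \<gamma> at_top at_top"

definition feasible_path :: "('x \<times> 'r::topological_space) set \<Rightarrow> 'r set \<Rightarrow> 'x \<Rightarrow> 'r \<Rightarrow> (real \<Rightarrow> 'r) \<Rightarrow> bool" where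
  "feasible_path \<Gamma> Rs x0 r p \<longleftrightarrow>
     continuous_on {0..1} p \<and> p ` {0..1} \<subseteq> Rs \<and> (x0, p 0) \<in> \<Gamma> \<and> p 1 = r"

definition Dx :: "('x \<times> 'r::topological_space) set \<Rightarrow> 'r set \<Rightarrow> 'r \<Rightarrow> 'x set" where
  "Dx \<Gamma> Rs r = {x0. \<exists>p. feasible_path \<Gamma> Rs x0 r p}"

end

theory Submission
  imports Defs
begin

(* The path parameter s_k is nondecreasing, since s_k itself is admissible in the maximisation
   defining s_(k+1): the optimal terminal state at (x_k, p s_k) lies in the terminal set for the
   reference p s_k. Hence s_k converges to some S <= 1 and consecutive references p s_k become
   arbitrarily close. Comparing with the shifted candidate, and using uniform continuity of l and
   V in the reference, the optimal cost decreases by the current stage cost up to errors that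
   vanish as k grows; being nonnegative, it forces x_k to come arbitrarily close to the equilibrium
   xbar (p s_k) infinitely often. The optimal terminal state depends Lipschitz continuously on
   the state and equals xbar r at the equilibrium, so at such a time it lies in a ball around
   (xbar (p S), p S) contained in the terminal set. Then s_(k+1) is at least every parameter in
   [0, 1] near S; as s_(k+1) <= S, this forces S = 1 and s_(k+1) = 1. *)

lemma dist_Pair_le_add: "dist (a, b) (c, d) \<le> dist a c + dist b d"
  by (simp add: dist_Pair_Pair sqrt_sum_squares_le_sum)

lemma class_K_inf_less_iff:
  assumes "class_K_inf \<gamma>" "0 \<le> a" "0 \<le> b"
  shows "\<gamma> a < \<gamma> b \<longleftrightarrow> a < b"
  using assms strict_mono_on_less[of "{0..}" \<gamma> a b] unfolding class_K_inf_def by auto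

lemma class_K_inf_pos_iff:
  assumes "class_K_inf \<gamma>" "0 \<le> a"
  shows "0 < \<gamma> a \<longleftrightarrow> 0 < a"
  using class_K_inf_less_iff[OF assms(1) order_refl assms(2)] assms(1)
  unfolding class_K_inf_def by simp

lemma nonneg_descent_frequently_less:
  fixes J a :: "nat \<Rightarrow> real"
  assumes J_nonneg: "\<And>k. 0 \<le> J k"
    and descent: "\<And>\<eta>. \<eta> > 0 \<Longrightarrow> eventually (\<lambda>k. J (Suc k) \<le> J k - a k + \<eta>) sequentially"
    and "c > 0"
  shows "frequently (\<lambda>k. a k < c) sequentially"
proof (rule ccontr)
  assume "\<not> ?thesis"
  then have "eventually (\<lambda>k. c \<le> a k) sequentially"
    by (simp add: not_frequently not_less)
  moreover have "eventually (\<lambda>k. J (Suc k) \<le> J k - a k + c/2) sequentially"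
    using descent \<open>c > 0\<close> by simp
  ultimately have "eventually (\<lambda>k. J (Suc k) \<le> J k - c/2) sequentially"
    by eventually_elim linarith
  then obtain K where K: "\<And>k. K \<le> k \<Longrightarrow> J (Suc k) \<le> J k - c/2"
    unfolding eventually_sequentially by blast
  have decay: "J (K + m) \<le> J K - real m * (c/2)" for m
  proof (induction m)
    case (Suc m)
    then show ?case using K[of "K + m"] by (simp add: field_simps)
  qed simp
  obtain m :: nat where "J K / (c/2) < real m"
    using reals_Archimedean2 by blast
  then have "J K < real m * (c/2)"
    using \<open>c > 0\<close> by (simp add: field_simps)
  with decay[of m] J_nonneg[of "K + m"] show False
    by linarith
qed

lemma ocp_cost_Suc:
  "ocp_cost l V (Suc M) r \<xi> \<mu> =
     l (\<xi> 0) (\<mu> 0) r + V (\<xi> (Suc M)) r + (\<Sum>i<M. l (\<xi> (Suc i)) (\<mu> (Suc i)) r)"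
  unfolding ocp_cost_def sum.lessThan_Suc_shift by simp

lemma ocp_feasible_equilibrium:
  assumes "(xe, r) \<in> T" "xe \<in> cset hx" "ue \<in> cset hu" "f xe ue = xe"
  shows "ocp_feasible f hx hu T N xe r (\<lambda>_. xe) (\<lambda>_. ue)"
  using assms unfolding ocp_feasible_def by simp

lemma ocp_feasible_terminal_policy:
  assumes "(x, r) \<in> T"
    and T_inv: "\<And>y. (y, r) \<in> T \<Longrightarrow> (f y (\<kappa>T y r), r) \<in> T \<and> y \<in> cset hx \<and> \<kappa>T y r \<in> cset hu"
  defines "\<phi> \<equiv> \<lambda>i. ((\<lambda>y. f y (\<kappa>T y r)) ^^ i) x"
  shows "ocp_feasible f hx hu T N x r \<phi> (\<lambda>i. \<kappa>T (\<phi> i) r)"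
proof -
  have "(\<phi> i, r) \<in> T" for i
    unfolding \<phi>_def by (induction i) (use assms(1) T_inv in auto)
  then show ?thesis
    unfolding ocp_feasible_def using T_inv by (simp add: \<phi>_def)
qed

definition shift_states ::
    "('x \<Rightarrow> 'u \<Rightarrow> 'x) \<Rightarrow> ('x \<Rightarrow> 'r \<Rightarrow> 'u) \<Rightarrow> nat \<Rightarrow> 'r \<Rightarrow> (nat \<Rightarrow> 'x) \<Rightarrow> nat \<Rightarrow> 'x" where
  "shift_states f \<kappa>T N r \<xi> i = (if i < N then \<xi> (Suc i) else f (\<xi> N) (\<kappa>T (\<xi> N) r))"

definition shift_inputs ::
    "('x \<Rightarrow> 'r \<Rightarrow> 'u) \<Rightarrow> nat \<Rightarrow> 'r \<Rightarrow> (nat \<Rightarrow> 'x) \<Rightarrow> (nat \<Rightarrow> 'u) \<Rightarrow> nat \<Rightarrow> 'u" where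
  "shift_inputs \<kappa>T N r \<xi> \<mu> i = (if i < N - 1 then \<mu> (Suc i) else \<kappa>T (\<xi> N) r)"

lemma ocp_feasible_shift:
  assumes feas: "ocp_feasible f hx hu T N x r \<xi> \<mu>" and "N > 0"
    and T_r': "(\<xi> N, r') \<in> T"
    and T_inv: "(f (\<xi> N) (\<kappa>T (\<xi> N) r'), r') \<in> T \<and> \<xi> N \<in> cset hx \<and> \<kappa>T (\<xi> N) r' \<in> cset hu"
  shows "ocp_feasible f hx hu T N (f x (\<mu> 0)) r'
           (shift_states f \<kappa>T N r' \<xi>) (shift_inputs \<kappa>T N r' \<xi> \<mu>)"
proof -
  obtain M where N: "N = Suc M"
    using \<open>N > 0\<close> gr0_implies_Suc by blast
  from feas have \<xi>0: "\<xi> 0 = x" and dyn: "\<And>i. i < N \<Longrightarrow> \<xi> (Suc i) = f (\<xi> i) (\<mu> i)"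
    and cons: "\<And>i. i < N \<Longrightarrow> \<xi> i \<in> cset hx \<and> \<mu> i \<in> cset hu"
    unfolding ocp_feasible_def by auto
  have "\<xi> (Suc i) \<in> cset hx" if "i < N" for i
    using cons[of "Suc i"] T_inv that by (cases "Suc i = N") auto
  moreover have "\<mu> (Suc i) \<in> cset hu" if "i < N - 1" for i
    using cons[of "Suc i"] that by simp
  ultimately show ?thesis
    using \<xi>0 dyn cons T_r' T_inv
    unfolding ocp_feasible_def shift_states_def shift_inputs_def N
    by (auto simp: less_Suc_eq simp del: lessThan_iff)
qed

lemma ocp_cost_shift_le:
  assumes "N > 0"
    and V_decr: "V (f (\<xi> N) (\<kappa>T (\<xi> N) r)) r - V (\<xi> N) r \<le> - l (\<xi> N) (\<kappa>T (\<xi> N) r) r"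
  shows "ocp_cost l V N r (shift_states f \<kappa>T N r \<xi>) (shift_inputs \<kappa>T N r \<xi> \<mu>)
           \<le> ocp_cost l V N r \<xi> \<mu> - l (\<xi> 0) (\<mu> 0) r"
proof -
  obtain M where N: "N = Suc M"
    using \<open>N > 0\<close> gr0_implies_Suc by blast
  have "ocp_cost l V N r (shift_states f \<kappa>T N r \<xi>) (shift_inputs \<kappa>T N r \<xi> \<mu>) =
      V (f (\<xi> N) (\<kappa>T (\<xi> N) r)) r + l (\<xi> N) (\<kappa>T (\<xi> N) r) r
      + (\<Sum>i<M. l (\<xi> (Suc i)) (\<mu> (Suc i)) r)"
    unfolding ocp_cost_def shift_states_def shift_inputs_def N by simp
  with V_decr show ?thesis
    unfolding N ocp_cost_Suc by simp
qed

text \<open>Assumptions (A1)--(A2) with the reference ranging over \<open>Rs\<close> (the set \<open>R_eps\<close>); of the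
  Lipschitz condition (A2)(e) only the terminal state of the minimiser is needed.\<close>

locale tracking_mpc =
  fixes f :: "'x::real_normed_vector \<Rightarrow> 'u::metric_space \<Rightarrow> 'x"
    and hx :: "'x \<Rightarrow> real ^ 'm" and hu :: "'u \<Rightarrow> real ^ 'q"
    and T :: "('x \<times> 'r::metric_space) set" and N :: nat and Rs :: "'r set"
    and xbar :: "'r \<Rightarrow> 'x" and ubar :: "'r \<Rightarrow> 'u"
    and l :: "'x \<Rightarrow> 'u \<Rightarrow> 'r \<Rightarrow> real" and V :: "'x \<Rightarrow> 'r \<Rightarrow> real"
    and \<kappa>T :: "'x \<Rightarrow> 'r \<Rightarrow> 'u" and \<gamma>l :: "real \<Rightarrow> real"
    and zeta :: "'x \<Rightarrow> 'r \<Rightarrow> (nat \<Rightarrow> 'x) \<times> (nat \<Rightarrow> 'u)"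
  assumes N_pos: "N > 0"
    and xbar_X: "\<And>r. r \<in> Rs \<Longrightarrow> xbar r \<in> cset hx"
    and ubar_U: "\<And>r. r \<in> Rs \<Longrightarrow> ubar r \<in> cset hu"
    and equil: "\<And>r. r \<in> Rs \<Longrightarrow> f (xbar r) (ubar r) = xbar r"
    and l_nonneg: "\<And>x u r. x \<in> cset hx \<Longrightarrow> u \<in> cset hu \<Longrightarrow> r \<in> Rs \<Longrightarrow> 0 \<le> l x u r"
    and V_nonneg: "\<And>x r. (x, r) \<in> T \<Longrightarrow> 0 \<le> V x r"
    and zeta_feas: "\<And>x r. (x, r) \<in> Gamma f hx hu T N Rs \<Longrightarrow>
         ocp_feasible f hx hu T N x r (fst (zeta x r)) (snd (zeta x r))"
    and zeta_opt: "\<And>x r \<xi> \<mu>. (x, r) \<in> Gamma f hx hu T N Rs \<Longrightarrow>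
         ocp_feasible f hx hu T N x r \<xi> \<mu> \<Longrightarrow>
         ocp_cost l V N r (fst (zeta x r)) (snd (zeta x r)) \<le> ocp_cost l V N r \<xi> \<mu>"
    and l_unif: "uniformly_continuous_on (cset hx \<times> cset hu \<times> Rs) (\<lambda>(x, u, r). l x u r)"
    and l_zero: "\<And>r. r \<in> Rs \<Longrightarrow> l (xbar r) (ubar r) r = 0"
    and \<gamma>l_K: "class_K_inf \<gamma>l"
    and l_lower: "\<And>x r u. (x, r) \<in> Gamma f hx hu T N Rs \<Longrightarrow> u \<in> cset hu \<Longrightarrow>
         \<gamma>l (norm (x - xbar r)) \<le> l x u r"
    and V_unif: "uniformly_continuous_on T (\<lambda>(x, r). V x r)"
    and V_zero: "\<And>r. r \<in> Rs \<Longrightarrow> V (xbar r) r = 0"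
    and V_decr: "\<And>x r. (x, r) \<in> T \<Longrightarrow> V (f x (\<kappa>T x r)) r - V x r \<le> - l x (\<kappa>T x r) r"
    and T_inv: "\<And>x r. (x, r) \<in> T \<Longrightarrow>
         (f x (\<kappa>T x r), r) \<in> T \<and> x \<in> cset hx \<and> \<kappa>T x r \<in> cset hu"
    and T_int: "\<And>r. r \<in> Rs \<Longrightarrow> (xbar r, r) \<in> interior T"
    and terminal_lipschitz: "\<exists>L. \<forall>(x, r) \<in> Gamma f hx hu T N Rs. \<forall>(x', r') \<in> Gamma f hx hu T N Rs.
         dist (fst (zeta x r) N) (fst (zeta x' r') N) \<le> L * dist (x, r) (x', r')"
begin

abbreviation "\<Gamma> \<equiv> Gamma f hx hu T N Rs"

abbreviation terminal_state :: "'x \<Rightarrow> 'r \<Rightarrow> 'x" where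
  "terminal_state x r \<equiv> fst (zeta x r) N"

abbreviation mpc_law :: "'x \<Rightarrow> 'r \<Rightarrow> 'u" where
  "mpc_law x r \<equiv> snd (zeta x r) 0"

definition opt_cost :: "'x \<Rightarrow> 'r \<Rightarrow> real" where
  "opt_cost x r = ocp_cost l V N r (fst (zeta x r)) (snd (zeta x r))"

lemma Gamma_iff:
  "(x, r) \<in> \<Gamma> \<longleftrightarrow> x \<in> cset hx \<and> r \<in> Rs \<and> (\<exists>\<xi> \<mu>. ocp_feasible f hx hu T N x r \<xi> \<mu>)"
  unfolding Gamma_def by simp

lemma terminal_in_Gamma:
  assumes "(x, r) \<in> T" "r \<in> Rs"
  shows "(x, r) \<in> \<Gamma>"
  using ocp_feasible_terminal_policy[of x r T f \<kappa>T hx hu N] assms T_inv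
  unfolding Gamma_iff by blast

lemma V_ge_class_K:
  assumes "(x, r) \<in> T" "r \<in> Rs"
  shows "\<gamma>l (norm (x - xbar r)) \<le> V x r"
proof -
  have "\<gamma>l (norm (x - xbar r)) \<le> l x (\<kappa>T x r) r"
    using l_lower[OF terminal_in_Gamma[OF assms]] T_inv[OF assms(1)] by blast
  with V_decr[OF assms(1)] V_nonneg[of "f x (\<kappa>T x r)" r] T_inv[OF assms(1)] show ?thesis
    by linarith
qed

lemma equilibrium_feasible:
  assumes "r \<in> Rs"
  shows "ocp_feasible f hx hu T N (xbar r) r (\<lambda>_. xbar r) (\<lambda>_. ubar r)"
proof (rule ocp_feasible_equilibrium)
  show "(xbar r, r) \<in> T"
    using interior_subset T_int[OF assms] by blast
qed (use assms xbar_X ubar_U equil in auto)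

lemma equilibrium_in_Gamma:
  assumes "r \<in> Rs"
  shows "(xbar r, r) \<in> \<Gamma>"
  using equilibrium_feasible[OF assms] xbar_X[OF assms] assms unfolding Gamma_iff by blast

lemma mpc_law_in_U:
  assumes "(x, r) \<in> \<Gamma>"
  shows "mpc_law x r \<in> cset hu"
  using zeta_feas[OF assms] N_pos unfolding ocp_feasible_def by simp

lemma opt_cost_nonneg:
  assumes "(x, r) \<in> \<Gamma>"
  shows "0 \<le> opt_cost x r"
proof -
  have "r \<in> Rs"
    using assms Gamma_iff by blast
  with zeta_feas[OF assms] V_nonneg l_nonneg show ?thesis
    unfolding opt_cost_def ocp_cost_def ocp_feasible_def
    by (auto intro!: add_nonneg_nonneg sum_nonneg)
qed

lemma terminal_state_equilibrium:
  assumes "r \<in> Rs"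
  shows "terminal_state (xbar r) r = xbar r"
proof -
  define \<xi> where "\<xi> = fst (zeta (xbar r) r)"
  define \<mu> where "\<mu> = snd (zeta (xbar r) r)"
  have feas: "ocp_feasible f hx hu T N (xbar r) r \<xi> \<mu>"
    using zeta_feas[OF equilibrium_in_Gamma[OF assms]] unfolding \<xi>_def \<mu>_def .
  have "ocp_cost l V N r \<xi> \<mu> \<le> ocp_cost l V N r (\<lambda>_. xbar r) (\<lambda>_. ubar r)"
    using zeta_opt[OF equilibrium_in_Gamma[OF assms] equilibrium_feasible[OF assms]]
    unfolding \<xi>_def \<mu>_def .
  also have "\<dots> = 0"
    unfolding ocp_cost_def using assms l_zero V_zero by simp
  finally have "V (\<xi> N) r + (\<Sum>i<N. l (\<xi> i) (\<mu> i) r) \<le> 0"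
    unfolding ocp_cost_def .
  moreover have "0 \<le> (\<Sum>i<N. l (\<xi> i) (\<mu> i) r)"
    using feas assms l_nonneg unfolding ocp_feasible_def by (auto intro!: sum_nonneg)
  moreover have "\<gamma>l (norm (\<xi> N - xbar r)) \<le> V (\<xi> N) r"
    using feas assms V_ge_class_K unfolding ocp_feasible_def by blast
  ultimately have "\<not> 0 < \<gamma>l (norm (\<xi> N - xbar r))"
    by linarith
  then show ?thesis
    using class_K_inf_pos_iff[OF \<gamma>l_K] unfolding \<xi>_def by simp
qed

lemma terminal_state_near_equilibrium:
  assumes "e > 0"
  obtains c where "c > 0"
    and "\<And>x r. (x, r) \<in> \<Gamma> \<Longrightarrow> norm (x - xbar r) < c \<Longrightarrow> dist (terminal_state x r) (xbar r) < e"
proof -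
  obtain L where L: "\<forall>(x, r) \<in> \<Gamma>. \<forall>(x', r') \<in> \<Gamma>.
      dist (terminal_state x r) (terminal_state x' r') \<le> L * dist (x, r) (x', r')"
    using terminal_lipschitz by blast
  show ?thesis
  proof
    show "e / (\<bar>L\<bar> + 1) > 0"
      using assms by (simp add: add_pos_nonneg)
  next
    fix x r
    assume \<Gamma>: "(x, r) \<in> \<Gamma>" and near: "norm (x - xbar r) < e / (\<bar>L\<bar> + 1)"
    then have r: "r \<in> Rs"
      using Gamma_iff by blast
    have L_x: "\<forall>(x', r') \<in> \<Gamma>. dist (terminal_state x r) (terminal_state x' r') \<le> L * dist (x, r) (x', r')"
      using bspec[OF L \<Gamma>] by simp
    have "dist (terminal_state x r) (xbar r) \<le> L * dist (x, r) (xbar r, r)"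
      using bspec[OF L_x equilibrium_in_Gamma[OF r]] terminal_state_equilibrium[OF r] by simp
    also have "\<dots> \<le> \<bar>L\<bar> * norm (x - xbar r)"
      by (simp add: dist_Pair_Pair dist_norm mult_right_mono)
    also have "\<dots> \<le> \<bar>L\<bar> * (e / (\<bar>L\<bar> + 1))"
      using near by (intro mult_left_mono) auto
    also have "\<dots> < e"
      using assms by (simp add: field_simps)
    finally show "dist (terminal_state x r) (xbar r) < e" .
  qed
qed

lemma shifted_solution_feasible:
  assumes "(x, r) \<in> \<Gamma>" "(terminal_state x r, r') \<in> T"
  shows "ocp_feasible f hx hu T N (f x (mpc_law x r)) r'
           (shift_states f \<kappa>T N r' (fst (zeta x r)))
           (shift_inputs \<kappa>T N r' (fst (zeta x r)) (snd (zeta x r)))"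
  using ocp_feasible_shift[where N = N and \<kappa>T = \<kappa>T and f = f and \<xi> = "fst (zeta x r)",
      OF zeta_feas[OF assms(1)] N_pos assms(2) T_inv[OF assms(2)]] .

lemma successor_in_Gamma:
  assumes "(x, r) \<in> \<Gamma>" "r' \<in> Rs" "(terminal_state x r, r') \<in> T"
  shows "(f x (mpc_law x r), r') \<in> \<Gamma>"
proof -
  let ?\<xi> = "shift_states f \<kappa>T N r' (fst (zeta x r))"
  have feas: "ocp_feasible f hx hu T N (f x (mpc_law x r)) r' ?\<xi>
      (shift_inputs \<kappa>T N r' (fst (zeta x r)) (snd (zeta x r)))"
    by (rule shifted_solution_feasible[OF assms(1,3)])
  then have "?\<xi> 0 = f x (mpc_law x r)" "?\<xi> 0 \<in> cset hx"
    using N_pos unfolding ocp_feasible_def by auto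
  with feas assms(2) show ?thesis
    unfolding Gamma_iff by auto
qed

lemma opt_cost_successor_le:
  assumes "(x, r) \<in> \<Gamma>" "r' \<in> Rs" "(terminal_state x r, r') \<in> T"
  shows "opt_cost (f x (mpc_law x r)) r'
           \<le> ocp_cost l V N r' (fst (zeta x r)) (snd (zeta x r)) - l x (mpc_law x r) r'"
proof -
  have "fst (zeta x r) 0 = x"
    using zeta_feas[OF assms(1)] unfolding ocp_feasible_def by simp
  then have "ocp_cost l V N r' (shift_states f \<kappa>T N r' (fst (zeta x r)))
        (shift_inputs \<kappa>T N r' (fst (zeta x r)) (snd (zeta x r)))
      \<le> ocp_cost l V N r' (fst (zeta x r)) (snd (zeta x r)) - l x (mpc_law x r) r'"
    using ocp_cost_shift_le[where N = N and \<kappa>T = \<kappa>T and f = f and V = V and l = l and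
        \<xi> = "fst (zeta x r)" and \<mu> = "snd (zeta x r)", OF N_pos V_decr[OF assms(3)]]
    by simp
  with zeta_opt[OF successor_in_Gamma[OF assms] shifted_solution_feasible[OF assms(1,3)]]
  show ?thesis
    unfolding opt_cost_def by linarith
qed

lemma opt_cost_decrease:
  assumes "\<eta> > 0"
  obtains \<delta> where "\<delta> > 0"
    and "\<And>x r r'. (x, r) \<in> \<Gamma> \<Longrightarrow> r' \<in> Rs \<Longrightarrow> (terminal_state x r, r') \<in> T \<Longrightarrow> dist r' r < \<delta> \<Longrightarrow>
           opt_cost (f x (mpc_law x r)) r' \<le> opt_cost x r - l x (mpc_law x r) r + \<eta>"
proof -
  obtain M where N: "N = Suc M"
    using N_pos gr0_implies_Suc by blast
  define \<epsilon> where "\<epsilon> = \<eta> / (2 * real N)"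
  have "\<epsilon> > 0"
    using assms N_pos unfolding \<epsilon>_def by simp
  obtain \<delta>l where "\<delta>l > 0" and \<delta>l: "\<And>z z'. z \<in> cset hx \<times> cset hu \<times> Rs \<Longrightarrow>
      z' \<in> cset hx \<times> cset hu \<times> Rs \<Longrightarrow> dist z' z < \<delta>l \<Longrightarrow>
      dist ((\<lambda>(x, u, r). l x u r) z') ((\<lambda>(x, u, r). l x u r) z) < \<epsilon>"
    using uniformly_continuous_onE[OF l_unif \<open>\<epsilon> > 0\<close>] by blast
  obtain \<delta>V where "\<delta>V > 0" and \<delta>V: "\<And>z z'. z \<in> T \<Longrightarrow> z' \<in> T \<Longrightarrow> dist z' z < \<delta>V \<Longrightarrow>
      dist ((\<lambda>(x, r). V x r) z') ((\<lambda>(x, r). V x r) z) < \<eta> / 2"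
    using uniformly_continuous_onE[OF V_unif half_gt_zero[OF assms]] by blast
  show ?thesis
  proof
    show "min \<delta>l \<delta>V > 0"
      using \<open>\<delta>l > 0\<close> \<open>\<delta>V > 0\<close> by simp
  next
    fix x r r'
    assume \<Gamma>: "(x, r) \<in> \<Gamma>" and r': "r' \<in> Rs" and T_r': "(terminal_state x r, r') \<in> T"
      and close: "dist r' r < min \<delta>l \<delta>V"
    define \<xi> where "\<xi> = fst (zeta x r)"
    define \<mu> where "\<mu> = snd (zeta x r)"
    have feas: "ocp_feasible f hx hu T N x r \<xi> \<mu>"
      using zeta_feas[OF \<Gamma>] unfolding \<xi>_def \<mu>_def .
    then have \<xi>0: "\<xi> 0 = x" and T_r: "(\<xi> N, r) \<in> T"
      and cons: "\<And>i. i < N \<Longrightarrow> \<xi> i \<in> cset hx \<and> \<mu> i \<in> cset hu"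
      unfolding ocp_feasible_def by auto
    have r: "r \<in> Rs"
      using \<Gamma> Gamma_iff by blast
    have "dist (V (\<xi> N) r') (V (\<xi> N) r) < \<eta> / 2"
      using \<delta>V[OF T_r T_r'[folded \<xi>_def]] close by (simp add: dist_Pair_Pair)
    then have V_change: "V (\<xi> N) r' < V (\<xi> N) r + \<eta> / 2"
      unfolding dist_real_def abs_less_iff by linarith
    have l_change: "l (\<xi> (Suc i)) (\<mu> (Suc i)) r' < l (\<xi> (Suc i)) (\<mu> (Suc i)) r + \<epsilon>" if "i < M" for i
    proof -
      have mem: "(\<xi> (Suc i), \<mu> (Suc i), r) \<in> cset hx \<times> cset hu \<times> Rs"
        "(\<xi> (Suc i), \<mu> (Suc i), r') \<in> cset hx \<times> cset hu \<times> Rs"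
        using cons[of "Suc i"] that r r' unfolding N by auto
      have "dist (l (\<xi> (Suc i)) (\<mu> (Suc i)) r') (l (\<xi> (Suc i)) (\<mu> (Suc i)) r) < \<epsilon>"
        using \<delta>l[OF mem] close by (simp add: dist_Pair_Pair)
      then show ?thesis
        unfolding dist_real_def abs_less_iff by linarith
    qed
    have "real M * \<epsilon> \<le> \<eta> / 2"
      using assms unfolding \<epsilon>_def N by (simp add: field_simps)
    moreover have "(\<Sum>i<M. l (\<xi> (Suc i)) (\<mu> (Suc i)) r')
        \<le> (\<Sum>i<M. l (\<xi> (Suc i)) (\<mu> (Suc i)) r) + real M * \<epsilon>"
      using sum_mono[of "{..<M}", OF less_imp_le[OF l_change]] by (simp add: sum.distrib)
    ultimately have "ocp_cost l V N r' \<xi> \<mu> - l x (\<mu> 0) r' \<le> ocp_cost l V N r \<xi> \<mu> - l x (\<mu> 0) r + \<eta>"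
      using V_change \<xi>0 unfolding N ocp_cost_Suc by simp
    then show "opt_cost (f x (mpc_law x r)) r' \<le> opt_cost x r - l x (mpc_law x r) r + \<eta>"
      using opt_cost_successor_le[OF \<Gamma> r' T_r'] unfolding opt_cost_def \<xi>_def \<mu>_def by simp
  qed
qed

end

text \<open>The last three assumptions say \<open>ss (Suc k) = g (terminal_state (xs k) (p (ss k)))\<close>.\<close>

locale pathfg_closed_loop = tracking_mpc f hx hu T N Rs xbar ubar l V \<kappa>T \<gamma>l zeta
  for f :: "'x::real_normed_vector \<Rightarrow> 'u::metric_space \<Rightarrow> 'x" and hx hu
    and T :: "('x \<times> 'r::metric_space) set" and N Rs xbar ubar l V \<kappa>T \<gamma>l zeta +
  fixes p :: "real \<Rightarrow> 'r" and xs :: "nat \<Rightarrow> 'x" and ss :: "nat \<Rightarrow> real"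
  assumes p_cont: "continuous_on {0..1} p" and p_Rs: "p ` {0..1} \<subseteq> Rs"
    and xbar_cont: "continuous_on Rs xbar"
    and ss0: "ss 0 \<in> {0..1}" and init_Gamma: "(xs 0, p (ss 0)) \<in> \<Gamma>"
    and xs_step: "\<And>k. xs (Suc k) = f (xs k) (mpc_law (xs k) (p (ss k)))"
    and ss_step_range: "\<And>k. ss (Suc k) \<in> {0..1}"
    and ss_step_terminal: "\<And>k. (terminal_state (xs k) (p (ss k)), p (ss (Suc k))) \<in> T"
    and ss_step_max: "\<And>k s. s \<in> {0..1} \<Longrightarrow> (terminal_state (xs k) (p (ss k)), p s) \<in> T \<Longrightarrow>
         s \<le> ss (Suc k)"
begin

lemma ss_range: "ss k \<in> {0..1}"
  by (cases k) (use ss0 ss_step_range in auto)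

lemma reference_in_Rs: "p (ss k) \<in> Rs"
  using p_Rs ss_range by blast

lemma closed_loop_in_Gamma: "(xs k, p (ss k)) \<in> \<Gamma>"
proof (induction k)
  case 0
  show ?case
    by (rule init_Gamma)
next
  case (Suc k)
  show ?case
    using successor_in_Gamma[OF Suc reference_in_Rs ss_step_terminal] xs_step by simp
qed

lemma ss_incseq: "incseq ss"
proof (rule incseq_SucI)
  fix k
  have "(terminal_state (xs k) (p (ss k)), p (ss k)) \<in> T"
    using zeta_feas[OF closed_loop_in_Gamma] unfolding ocp_feasible_def by simp
  then show "ss k \<le> ss (Suc k)"
    using ss_step_max ss_range by blast
qed

definition s_lim :: real where
  "s_lim = (SUP k. ss k)"

lemma ss_bdd_above: "bdd_above (range ss)"
  using ss_range by (auto intro!: bdd_aboveI[of _ 1])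

lemma ss_le_s_lim: "ss k \<le> s_lim"
  unfolding s_lim_def by (rule cSUP_upper[OF _ ss_bdd_above]) simp

lemma s_lim_range: "s_lim \<in> {0..1}"
proof -
  have "0 \<le> s_lim"
    using ss_le_s_lim[of 0] ss_range[of 0] by simp
  moreover have "s_lim \<le> 1"
    unfolding s_lim_def using ss_range by (auto intro!: cSUP_least)
  ultimately show ?thesis
    by simp
qed

lemma ss_tendsto: "ss \<longlonglongrightarrow> s_lim"
  unfolding s_lim_def using ss_bdd_above ss_incseq by (rule LIMSEQ_incseq_SUP)

lemma reference_tendsto: "(\<lambda>k. p (ss k)) \<longlonglongrightarrow> p s_lim"
  using continuous_on_tendsto_compose[OF p_cont ss_tendsto s_lim_range] ss_range by simp

lemma equilibrium_tendsto: "(\<lambda>k. xbar (p (ss k))) \<longlonglongrightarrow> xbar (p s_lim)"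
proof (rule continuous_on_tendsto_compose[OF xbar_cont reference_tendsto])
  show "p s_lim \<in> Rs"
    using p_Rs s_lim_range by blast
qed (simp add: reference_in_Rs)

lemma opt_cost_descent:
  assumes "\<eta> > 0"
  shows "eventually (\<lambda>k. opt_cost (xs (Suc k)) (p (ss (Suc k)))
           \<le> opt_cost (xs k) (p (ss k)) - l (xs k) (mpc_law (xs k) (p (ss k))) (p (ss k)) + \<eta>)
         sequentially"
proof -
  obtain \<delta> where "\<delta> > 0" and \<delta>: "\<And>x r r'. (x, r) \<in> \<Gamma> \<Longrightarrow> r' \<in> Rs \<Longrightarrow>
      (terminal_state x r, r') \<in> T \<Longrightarrow> dist r' r < \<delta> \<Longrightarrow>
      opt_cost (f x (mpc_law x r)) r' \<le> opt_cost x r - l x (mpc_law x r) r + \<eta>"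
    using opt_cost_decrease[OF assms] by blast
  have "(\<lambda>k. dist (p (ss (Suc k))) (p (ss k))) \<longlonglongrightarrow> dist (p s_lim) (p s_lim)"
    using tendsto_dist[OF LIMSEQ_Suc[OF reference_tendsto] reference_tendsto] .
  then have "eventually (\<lambda>k. dist (p (ss (Suc k))) (p (ss k)) < \<delta>) sequentially"
    using \<open>\<delta> > 0\<close> by (simp add: order_tendstoD(2))
  then show ?thesis
  proof eventually_elim
    case (elim k)
    show ?case
      using \<delta>[OF closed_loop_in_Gamma reference_in_Rs ss_step_terminal elim] xs_step by simp
  qed
qed

lemma frequently_near_equilibrium:
  assumes "c > 0"
  shows "frequently (\<lambda>k. norm (xs k - xbar (p (ss k))) < c) sequentially"
proof -
  have "\<gamma>l c > 0"
    using class_K_inf_pos_iff[OF \<gamma>l_K] assms by simp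
  with opt_cost_nonneg[OF closed_loop_in_Gamma] opt_cost_descent
  have "frequently (\<lambda>k. l (xs k) (mpc_law (xs k) (p (ss k))) (p (ss k)) < \<gamma>l c) sequentially"
    by (rule nonneg_descent_frequently_less)
  then show ?thesis
  proof (rule frequently_elim1)
    fix k
    assume "l (xs k) (mpc_law (xs k) (p (ss k))) (p (ss k)) < \<gamma>l c"
    with l_lower[OF closed_loop_in_Gamma mpc_law_in_U[OF closed_loop_in_Gamma]]
    have "\<gamma>l (norm (xs k - xbar (p (ss k)))) < \<gamma>l c"
      by (rule le_less_trans)
    then show "norm (xs k - xbar (p (ss k))) < c"
      using class_K_inf_less_iff[OF \<gamma>l_K] assms by simp
  qed
qed

lemma closed_loop_reaches_end: "\<exists>k. ss (Suc k) = 1"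
proof -
  let ?S = s_lim
  obtain \<rho> where "\<rho> > 0" and \<rho>: "ball (xbar (p ?S), p ?S) \<rho> \<subseteq> T"
    using T_int p_Rs s_lim_range mem_interior by blast
  then have "\<rho> / 3 > 0"
    by simp
  then obtain c where "c > 0" and c: "\<And>x r. (x, r) \<in> \<Gamma> \<Longrightarrow> norm (x - xbar r) < c \<Longrightarrow>
      dist (terminal_state x r) (xbar r) < \<rho> / 3"
    using terminal_state_near_equilibrium by blast
  obtain \<theta> where "\<theta> > 0" and \<theta>: "\<And>s. s \<in> {0..1} \<Longrightarrow> dist s ?S < \<theta> \<Longrightarrow> dist (p s) (p ?S) < \<rho> / 3"
    using p_cont[unfolded continuous_on_iff, rule_format, OF s_lim_range \<open>\<rho> / 3 > 0\<close>] by blast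
  have "eventually (\<lambda>k. dist (xbar (p (ss k))) (xbar (p ?S)) < \<rho> / 3) sequentially"
    using tendstoD[OF equilibrium_tendsto \<open>\<rho> / 3 > 0\<close>] .
  with frequently_near_equilibrium[OF \<open>c > 0\<close>]
  have "frequently (\<lambda>k. norm (xs k - xbar (p (ss k))) < c
      \<and> dist (xbar (p (ss k))) (xbar (p ?S)) < \<rho> / 3) sequentially"
    by (rule frequently_eventually_frequently)
  then obtain k where near: "norm (xs k - xbar (p (ss k))) < c"
      and eq_close: "dist (xbar (p (ss k))) (xbar (p ?S)) < \<rho> / 3"
    using frequently_ex by blast
  let ?xN = "terminal_state (xs k) (p (ss k))"
  have "dist ?xN (xbar (p ?S)) < 2 * \<rho> / 3"
    using c[OF closed_loop_in_Gamma near] eq_close dist_triangle[of ?xN "xbar (p ?S)" "xbar (p (ss k))"]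
    by linarith
  have below: "s \<le> ss (Suc k)" if "s \<in> {0..1}" "dist s ?S < \<theta>" for s
  proof (rule ss_step_max[OF that(1)])
    have "dist (?xN, p s) (xbar (p ?S), p ?S) < \<rho>"
      using \<open>dist ?xN (xbar (p ?S)) < 2 * \<rho> / 3\<close> \<theta>[OF that]
        dist_Pair_le_add[of ?xN "p s" "xbar (p ?S)" "p ?S"]
      by linarith
    then have "(?xN, p s) \<in> ball (xbar (p ?S), p ?S) \<rho>"
      by (simp add: dist_commute)
    then show "(?xN, p s) \<in> T"
      using \<rho> by blast
  qed
  define s where "s = min 1 (?S + \<theta> / 2)"
  have "s \<le> ss (Suc k)"
    using below s_lim_range \<open>\<theta> > 0\<close> unfolding s_def by (simp add: dist_real_def)
  then have "ss (Suc k) = 1"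
    using ss_le_s_lim[of "Suc k"] ss_range[of "Suc k"] \<open>\<theta> > 0\<close> unfolding s_def by auto
  then show ?thesis ..
qed

lemma closed_loop_eventually_at_end: "\<exists>kM. \<forall>k\<ge>kM + 1. ss k = 1"
proof -
  obtain kM where "ss (Suc kM) = 1"
    using closed_loop_reaches_end by blast
  then have "ss k = 1" if "k \<ge> kM + 1" for k
    using ss_incseq[unfolded incseq_def, rule_format, of "Suc kM" k] ss_range[of k] that by simp
  then show ?thesis
    by blast
qed

end

theorem lemma8:
  fixes f :: "real ^ 'nx \<Rightarrow> real ^ 'nu \<Rightarrow> real ^ 'nx"
    and hx :: "real ^ 'nx \<Rightarrow> real ^ 'mx" and hu :: "real ^ 'nu \<Rightarrow> real ^ 'mu"
    and R :: "(real ^ 'nr) set"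
    and xbar :: "real ^ 'nr \<Rightarrow> real ^ 'nx" and ubar :: "real ^ 'nr \<Rightarrow> real ^ 'nu"
    and eps :: real and N :: nat
    and l :: "real ^ 'nx \<Rightarrow> real ^ 'nu \<Rightarrow> real ^ 'nr \<Rightarrow> real"
    and T :: "((real ^ 'nx) \<times> (real ^ 'nr)) set"
    and V :: "real ^ 'nx \<Rightarrow> real ^ 'nr \<Rightarrow> real"
    and \<kappa>T :: "real ^ 'nx \<Rightarrow> real ^ 'nr \<Rightarrow> real ^ 'nu"
    and \<gamma>l :: "real \<Rightarrow> real"
    and zeta :: "real ^ 'nx \<Rightarrow> real ^ 'nr \<Rightarrow> (nat \<Rightarrow> real ^ 'nx) \<times> (nat \<Rightarrow> real ^ 'nu)"
    and r :: "real ^ 'nr" and x0 :: "real ^ 'nx" and s0 :: real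
    and p :: "real \<Rightarrow> real ^ 'nr"
    and xs :: "nat \<Rightarrow> real ^ 'nx" and ss :: "nat \<Rightarrow> real"
  defines "X \<equiv> cset hx" and "U \<equiv> cset hu"
    and "Rs \<equiv> Reps R xbar ubar hx hu eps"
    and "\<Gamma> \<equiv> Gamma f hx hu T N (Reps R xbar ubar hx hu eps)"
  assumes eps_pos: "eps > 0" and N_pos: "N > 0"
    \<comment> \<open>(A1)\<close>
    and f_loc_lip: "\<forall>z. \<exists>e>0. \<exists>L. L-lipschitz_on (ball z e) (\<lambda>(x, u). f x u)"
    and hx_cont: "continuous_on UNIV hx" and hu_cont: "continuous_on UNIV hu"
    and xbar_cont: "continuous_on R xbar" and ubar_cont: "continuous_on R ubar"
    and xbar_X: "\<forall>r\<in>R. xbar r \<in> X" and ubar_U: "\<forall>r\<in>R. ubar r \<in> U"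
    and equil: "\<forall>r\<in>R. xbar r = f (xbar r) (ubar r)"
    \<comment> \<open>MPC data: terminal set in X x R, stage cost and terminal cost nonnegative\<close>
    and T_sub: "T \<subseteq> X \<times> R"
    and l_nonneg: "\<forall>x\<in>X. \<forall>u\<in>U. \<forall>r\<in>Rs. l x u r \<ge> 0"
    and V_nonneg: "\<forall>(x, r)\<in>T. V x r \<ge> 0"
    \<comment> \<open>zeta is the minimizer of the OCP on Gamma\<close>
    and zeta_feas: "\<forall>(x, r)\<in>\<Gamma>. ocp_feasible f hx hu T N x r (fst (zeta x r)) (snd (zeta x r))"
    and zeta_opt: "\<forall>(x, r)\<in>\<Gamma>. \<forall>\<xi> \<mu>. ocp_feasible f hx hu T N x r \<xi> \<mu> \<longrightarrow>
         ocp_cost l V N r (fst (zeta x r)) (snd (zeta x r)) \<le> ocp_cost l V N r \<xi> \<mu>"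
    \<comment> \<open>(A2)(a)\<close>
    and l_unif: "uniformly_continuous_on (X \<times> U \<times> Rs) (\<lambda>(x, u, r). l x u r)"
    and l_zero: "\<forall>r\<in>Rs. l (xbar r) (ubar r) r = 0"
    and \<gamma>l_K: "class_K_inf \<gamma>l"
    and l_lower: "\<forall>(x, r)\<in>\<Gamma>. \<forall>u\<in>U. l x u r \<ge> \<gamma>l (norm (x - xbar r))"
    \<comment> \<open>(A2)(b)\<close>
    and V_unif: "uniformly_continuous_on T (\<lambda>(x, r). V x r)"
    and V_zero: "\<forall>r\<in>Rs. V (xbar r) r = 0"
    and V_decr: "\<forall>(x, r)\<in>T. V (f x (\<kappa>T x r)) r - V x r \<le> - l x (\<kappa>T x r) r"
    \<comment> \<open>(A2)(c)\<close>
    and T_inv: "\<forall>(x, r)\<in>T. (f x (\<kappa>T x r), r) \<in> T \<and> x \<in> X \<and> \<kappa>T x r \<in> U"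
    \<comment> \<open>(A2)(d)\<close>
    and T_int: "\<forall>r\<in>Rs. (xbar r, r) \<in> interior T"
    \<comment> \<open>(A2)(e): zeta Lipschitz on Gamma\<close>
    and zeta_lip: "\<exists>L. \<forall>a\<in>\<Gamma>. \<forall>b\<in>\<Gamma>.
         (\<forall>i\<le>N. dist (fst (case_prod zeta a) i) (fst (case_prod zeta b) i) \<le> L * dist a b) \<and>
         (\<forall>i<N. dist (snd (case_prod zeta a) i) (snd (case_prod zeta b) i) \<le> L * dist a b)"
    \<comment> \<open>r, x0 in D_x(r), and (A3): p is the feasible path returned by the planner\<close>
    and r_in: "r \<in> Rs"
    and x0_D: "x0 \<in> Dx \<Gamma> Rs r"
    and p_path: "feasible_path \<Gamma> Rs x0 r p"
    \<comment> \<open>initial condition (x0,s0) in tilde Gamma\<close>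
    and s0_in: "s0 \<in> {0..1}" and init_Gamma: "(x0, p s0) \<in> \<Gamma>"
    \<comment> \<open>closed-loop PathFG+MPC trajectory\<close>
    and xs0: "xs 0 = x0" and ss0: "ss 0 = s0"
    and xs_step: "\<forall>k. xs (Suc k) = f (xs k) (snd (zeta (xs k) (p (ss k))) 0)"
    and ss_step: "\<forall>k. ss (Suc k) \<in> {s\<in>{0..1}. (fst (zeta (xs k) (p (ss k))) N, p s) \<in> T} \<and>
         (\<forall>s\<in>{0..1}. (fst (zeta (xs k) (p (ss k))) N, p s) \<in> T \<longrightarrow> s \<le> ss (Suc k))"
  shows "\<exists>kM. \<forall>k\<ge>kM + 1. ss k = 1"
proof -
  have Rs_R: "Rs \<subseteq> R"
    unfolding Rs_def Reps_def by auto
  have \<Gamma>_eq: "\<Gamma> = Gamma f hx hu T N Rs"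
    unfolding \<Gamma>_def Rs_def ..
  have mpc: "tracking_mpc f hx hu T N Rs xbar ubar l V \<kappa>T \<gamma>l zeta"
  proof
    show "\<And>r. r \<in> Rs \<Longrightarrow> xbar r \<in> cset hx" "\<And>r. r \<in> Rs \<Longrightarrow> ubar r \<in> cset hu"
      "\<And>r. r \<in> Rs \<Longrightarrow> f (xbar r) (ubar r) = xbar r"
      using xbar_X ubar_U equil Rs_R unfolding X_def U_def by auto
    show "\<And>x u r. x \<in> cset hx \<Longrightarrow> u \<in> cset hu \<Longrightarrow> r \<in> Rs \<Longrightarrow> 0 \<le> l x u r"
      using l_nonneg unfolding X_def U_def by blast
    show "\<And>x r. (x, r) \<in> Gamma f hx hu T N Rs \<Longrightarrow> ocp_feasible f hx hu T N x r (fst (zeta x r)) (snd (zeta x r))"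
      using zeta_feas unfolding \<Gamma>_eq by blast
    show "\<And>x r \<xi> \<mu>. (x, r) \<in> Gamma f hx hu T N Rs \<Longrightarrow> ocp_feasible f hx hu T N x r \<xi> \<mu> \<Longrightarrow>
        ocp_cost l V N r (fst (zeta x r)) (snd (zeta x r)) \<le> ocp_cost l V N r \<xi> \<mu>"
      using zeta_opt unfolding \<Gamma>_eq by blast
    show "\<And>x r u. (x, r) \<in> Gamma f hx hu T N Rs \<Longrightarrow> u \<in> cset hu \<Longrightarrow> \<gamma>l (norm (x - xbar r)) \<le> l x u r"
      using l_lower unfolding \<Gamma>_eq U_def by blast
    show "\<And>x r. (x, r) \<in> T \<Longrightarrow> (f x (\<kappa>T x r), r) \<in> T \<and> x \<in> cset hx \<and> \<kappa>T x r \<in> cset hu"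
      using T_inv unfolding X_def U_def by blast
    obtain L where "\<forall>a\<in>\<Gamma>. \<forall>b\<in>\<Gamma>.
        dist (fst (case_prod zeta a) N) (fst (case_prod zeta b) N) \<le> L * dist a b"
      using zeta_lip by blast
    then show "\<exists>L. \<forall>(x, r) \<in> Gamma f hx hu T N Rs. \<forall>(x', r') \<in> Gamma f hx hu T N Rs.
        dist (fst (zeta x r) N) (fst (zeta x' r') N) \<le> L * dist (x, r) (x', r')"
      unfolding \<Gamma>_eq by (intro exI[of _ L]) auto
  qed (use N_pos V_nonneg l_unif l_zero \<gamma>l_K V_unif V_zero V_decr T_int in \<open>auto simp: X_def U_def\<close>)
  have "pathfg_closed_loop f hx hu T N Rs xbar ubar l V \<kappa>T \<gamma>l zeta p xs ss"
  proof (rule pathfg_closed_loop.intro[OF mpc], unfold_locales)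
    show "continuous_on {0..1} p" "p ` {0..1} \<subseteq> Rs"
      using p_path unfolding feasible_path_def by auto
    show "continuous_on Rs xbar"
      using continuous_on_subset[OF xbar_cont Rs_R] .
    show "ss 0 \<in> {0..1}" "(xs 0, p (ss 0)) \<in> Gamma f hx hu T N Rs"
      using s0_in init_Gamma xs0 ss0 \<Gamma>_eq by simp_all
  qed (use xs_step ss_step in auto)
  then show ?thesis
    by (rule pathfg_closed_loop.closed_loop_eventually_at_end)
qed

end
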